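(* In the multi-access coded caching scheme obtained from a cross resolvable design with a chosen $z\in\{2,\dots,r\}$ for which $\mu_z$ exists (described in the context), the number of users benefited in each transmission (the coding gain) is $g=2^z$.
   Context: A resolvable design $(X,\mathcal{A})$: $X$ a finite set of $v$ points, $\mathcal{A}$ a collection of $b$ blocks each of size $k$, partitioned into $r$ parallel classes, each being a set of $b_r=v/k$ pairwise disjoint blocks with union $X$. $\mu_z$ exists if $|B_1\cap\cdots\cap B_z|$ equals the same nonzero value $\mu_z$ for every choice of blocks from $z$ distinct parallel classes. Users: one user $U_H$ for each set $H$ of $z$ blocks from $z$ distinct parallel classes, connected to the caches of those blocks (one cache per block). Placement: each file $W_i$ is split into subfiles $W_{i,x}$, $x\in X$; the cache of block $A_j$ stores $W_{i,x}$ for $x\in A_j$ and all $i$. Delivery (distinct demands $d_m$): for each choice of $z$ parallel classes $\mathcal{P}_1,\dots,\mathcal{P}_z$ and each choice of a pair of distinct blocks $\{C_{s,i_s},C_{s,j_s}\}\subseteq\mathcal{P}_s$ for every $s\in[z]$, let $\mathcal{X}$ be the $2^z$ users whose caches consist of one block from each chosen pair; for $m\in\mathcal{X}$ connected to $C_{1,a_1},\dots,C_{z,a_z}$, with $e_s$ the other index of $\{i_s,j_s\}$, put $f_m=C_{1,e_1}\cap\cdots\cap C_{z,e_z}=\{y_{m,1},\dots,y_{m,\mu_z}\}$, and transmit $\bigoplus_{m\in\mathcal{X}}W_{d_m,y_{m,s}}$ for each $s\in[\mu_z]$. A user is benefited by a transmission if it obtains a subfile of its demanded file from it. *)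

theory Defs
  imports Main "HOL-Library.FuncSet"
begin

text \<open>A block of the design is identified by the pair (class index, block).\<close>
definition resolvable_design :: "'a set \<Rightarrow> nat \<Rightarrow> nat \<Rightarrow> (nat \<Rightarrow> 'a set set) \<Rightarrow> bool" where
  "resolvable_design X k r P \<longleftrightarrow> finite X \<and> 0 < k \<and>
     (\<forall>t\<in>{1..r}. (\<forall>B\<in>P t. B \<subseteq> X \<and> card B = k) \<and> \<Union>(P t) = X \<and>
        (\<forall>B\<in>P t. \<forall>B'\<in>P t. B \<noteq> B' \<longrightarrow> B \<inter> B' = {}) \<and> card (P t) = card X div k)"

definition mu_exists :: "nat \<Rightarrow> (nat \<Rightarrow> 'a set set) \<Rightarrow> nat \<Rightarrow> nat \<Rightarrow> bool" where
  "mu_exists r P z \<mu> \<longleftrightarrow> 0 < \<mu> \<and>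
     (\<forall>J. J \<subseteq> {1..r} \<and> card J = z \<longrightarrow> (\<forall>g\<in>Pi J P. card (\<Inter>t\<in>J. g t) = \<mu>))"

text \<open>The user connected to the blocks g t of classes t \<in> J.\<close>
definition user_of :: "nat set \<Rightarrow> (nat \<Rightarrow> 'a set) \<Rightarrow> (nat \<times> 'a set) set" where
  "user_of J g = (\<lambda>t. (t, g t)) ` J"

definition users :: "nat \<Rightarrow> (nat \<Rightarrow> 'a set set) \<Rightarrow> nat \<Rightarrow> (nat \<times> 'a set) set set" where
  "users r P z = {H. \<exists>J g. J \<subseteq> {1..r} \<and> card J = z \<and> g \<in> Pi J P \<and> H = user_of J g}"

text \<open>Points x whose subfiles W_{i,x} (for all i) are accessible to user H.\<close>
definition cache :: "(nat \<times> 'a set) set \<Rightarrow> 'a set" where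
  "cache H = \<Union>(snd ` H)"

text \<open>A transmission is the XOR of the subfiles W_{i,x} for (i,x) in T.
  User H is benefited if it obtains from it a subfile of its demanded file
  (not already cached), i.e. all other summands are cached.\<close>
definition benefited :: "((nat \<times> 'a set) set \<Rightarrow> 'f) \<Rightarrow> (nat \<times> 'a set) set \<Rightarrow> ('f \<times> 'a) set \<Rightarrow> bool" where
  "benefited d H T \<longleftrightarrow> (\<exists>x. (d H, x) \<in> T \<and> x \<notin> cache H \<and>
       (\<forall>p\<in>T. p \<noteq> (d H, x) \<longrightarrow> snd p \<in> cache H))"

definition other :: "(nat \<Rightarrow> 'a set) \<Rightarrow> (nat \<Rightarrow> 'a set) \<Rightarrow> (nat \<Rightarrow> 'a set) \<Rightarrow> nat \<Rightarrow> 'a set" where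
  "other i j c t = (if c t = i t then j t else i t)"

definition user_group :: "nat set \<Rightarrow> (nat \<Rightarrow> 'a set) \<Rightarrow> (nat \<Rightarrow> 'a set) \<Rightarrow> (nat \<times> 'a set) set set" where
  "user_group J i j = user_of J ` (PiE J (\<lambda>t. {i t, j t}))"

definition transmission :: "((nat \<times> 'a set) set \<Rightarrow> 'f) \<Rightarrow> ((nat \<times> 'a set) set \<Rightarrow> nat \<Rightarrow> 'a)
     \<Rightarrow> nat set \<Rightarrow> (nat \<Rightarrow> 'a set) \<Rightarrow> (nat \<Rightarrow> 'a set) \<Rightarrow> nat \<Rightarrow> ('f \<times> 'a) set" where
  "transmission d y J i j s = (\<lambda>m. (d m, y m s)) ` user_group J i j"

end

theory Submission
  imports Defs
begin

text \<open>Write a member of the user group as a choice c t \<in> {i t, j t} of blocks, t \<in> J. The points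
  it decodes lie in every opposite block other i j c t and hence, the blocks of a class being
  disjoint, in none of its own blocks. Any other member c' differs from c in some class t, where
  the block opposite to c' t is c t; so every other summand of the transmission is cached by c.
  Since demands are distinct, no user outside the group finds its demand in the transmission, and
  the group has 2^z members because a user determines its block choices.\<close>

lemma resolvable_design_blocks_disjoint:
  assumes "resolvable_design X k r P" "t \<in> {1..r}" "B \<in> P t" "B' \<in> P t" "B \<noteq> B'"
  shows "B \<inter> B' = {}"
  using assms unfolding resolvable_design_def by simp

lemma inj_on_user_of: "inj_on (user_of J) (extensional J)"
proof (rule inj_onI)
  fix c c' assume c: "c \<in> extensional J" and c': "c' \<in> extensional J"
    and eq: "user_of J c = user_of J c'"
  have "c t = c' t" if "t \<in> J" for t
  proof -
    have "(t, c t) \<in> user_of J c'" using that eq unfolding user_of_def by blast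
    then show ?thesis unfolding user_of_def by auto
  qed
  then show "c = c'" by (intro extensionalityI[OF c c'])
qed

lemma cache_user_of: "cache (user_of J c) = (\<Union>t\<in>J. c t)"
  unfolding cache_def user_of_def by (auto simp: image_image)

lemma card_user_group:
  assumes "finite J" "\<forall>t\<in>J. i t \<noteq> j t"
  shows "card (user_group J i j) = 2 ^ card J"
proof -
  have "card (user_group J i j) = card (PiE J (\<lambda>t. {i t, j t}))"
    unfolding user_group_def
    by (intro card_image inj_on_subset[OF inj_on_user_of]) (auto simp: PiE_iff)
  also have "\<dots> = (\<Prod>t\<in>J. card {i t, j t})" using assms(1) by (rule card_PiE)
  also have "\<dots> = (\<Prod>t\<in>J. 2)" using assms(2) by (intro prod.cong) auto
  finally show ?thesis by simp
qed

lemma user_group_subset_users: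
  assumes "J \<subseteq> {1..r}" "card J = z" "\<forall>t\<in>J. i t \<in> P t \<and> j t \<in> P t"
  shows "user_group J i j \<subseteq> users r P z"
proof
  fix m assume "m \<in> user_group J i j"
  then obtain c where c: "c \<in> PiE J (\<lambda>t. {i t, j t})" and m: "m = user_of J c"
    unfolding user_group_def by blast
  have "c \<in> Pi J P" using c assms(3) by (auto simp: PiE_def Pi_def)
  then show "m \<in> users r P z" unfolding users_def using assms(1,2) m by blast
qed

lemma other_inter_disjoint_cache:
  assumes "c \<in> PiE J (\<lambda>t. {i t, j t})" "\<forall>t\<in>J. i t \<inter> j t = {}"
  shows "(\<Inter>t\<in>J. other i j c t) \<inter> cache (user_of J c) = {}"
proof -
  have "other i j c t \<inter> c t = {}" if "t \<in> J" for t
    using PiE_mem[OF assms(1) that] assms(2) that unfolding other_def by auto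
  then show ?thesis unfolding cache_user_of by blast
qed

lemma other_inter_subset_cache:
  assumes c: "c \<in> PiE J (\<lambda>t. {i t, j t})" and c': "c' \<in> PiE J (\<lambda>t. {i t, j t})"
    and "c' \<noteq> c"
  shows "(\<Inter>t\<in>J. other i j c' t) \<subseteq> cache (user_of J c)"
proof -
  obtain t where t: "t \<in> J" "c' t \<noteq> c t"
    using \<open>c' \<noteq> c\<close> PiE_ext[OF c' c] by blast
  then have "other i j c' t = c t"
    using PiE_mem[OF c t(1)] PiE_mem[OF c' t(1)] unfolding other_def by auto
  then show ?thesis unfolding cache_user_of using t(1) by blast
qed

lemma benefited_by_image:
  assumes "m \<in> G" "f m \<notin> cache m" "\<forall>m'\<in>G. m' \<noteq> m \<longrightarrow> f m' \<in> cache m"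
  shows "benefited d m ((\<lambda>m. (d m, f m)) ` G)"
  unfolding benefited_def using assms by (intro exI[of _ "f m"]) auto

lemma benefited_by_image_mem:
  assumes "inj_on d U" "G \<subseteq> U" "H \<in> U" "benefited d H ((\<lambda>m. (d m, f m)) ` G)"
  shows "H \<in> G"
proof -
  obtain m where "m \<in> G" "d H = d m"
    using assms(4) unfolding benefited_def by auto
  then show ?thesis using assms(1-3) by (metis inj_onD subsetD)
qed

theorem lemma4:
  fixes X :: "'a set" and P :: "nat \<Rightarrow> 'a set set"
    and d :: "(nat \<times> 'a set) set \<Rightarrow> 'f"
    and y :: "(nat \<times> 'a set) set \<Rightarrow> nat \<Rightarrow> 'a"
    and i j :: "nat \<Rightarrow> 'a set"
  assumes design: "resolvable_design X k r P"
    and z: "z \<in> {2..r}"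
    and mu: "mu_exists r P z \<mu>"
    and distinct_demands: "inj_on d (users r P z)"
    and J: "J \<subseteq> {1..r}" "card J = z"
    and pairs: "\<forall>t\<in>J. i t \<in> P t \<and> j t \<in> P t \<and> i t \<noteq> j t"
    and enum: "\<forall>c\<in>PiE J (\<lambda>t. {i t, j t}).
                 bij_betw (y (user_of J c)) {1..\<mu>} (\<Inter>t\<in>J. other i j c t)"
    and s: "s \<in> {1..\<mu>}"
  shows "{H \<in> users r P z. benefited d H (transmission d y J i j s)} = user_group J i j
         \<and> card (user_group J i j) = 2 ^ z"
proof -
  let ?C = "PiE J (\<lambda>t. {i t, j t})"
  have group: "user_group J i j \<subseteq> users r P z"
    using J pairs by (intro user_group_subset_users) auto
  have disjoint: "\<forall>t\<in>J. i t \<inter> j t = {}"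
  proof
    fix t assume "t \<in> J"
    then show "i t \<inter> j t = {}"
      using J(1) pairs by (intro resolvable_design_blocks_disjoint[OF design, of t]) auto
  qed
  have decoded: "y (user_of J c) s \<in> (\<Inter>t\<in>J. other i j c t)" if "c \<in> ?C" for c
    using bij_betw_apply[OF bspec[OF enum that] s] .
  have "benefited d m (transmission d y J i j s)" if m: "m \<in> user_group J i j" for m
  proof -
    obtain c where c: "c \<in> ?C" and mc: "m = user_of J c"
      using m unfolding user_group_def by blast
    show ?thesis unfolding transmission_def
    proof (rule benefited_by_image[OF m])
      show "y m s \<notin> cache m"
        using decoded[OF c] other_inter_disjoint_cache[OF c disjoint] unfolding mc by blast
      show "\<forall>m'\<in>user_group J i j. m' \<noteq> m \<longrightarrow> y m' s \<in> cache m"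
      proof (intro ballI impI)
        fix m' assume "m' \<in> user_group J i j" "m' \<noteq> m"
        then obtain c' where c': "c' \<in> ?C" and mc': "m' = user_of J c'"
          unfolding user_group_def by blast
        with \<open>m' \<noteq> m\<close> mc have "c' \<noteq> c" by blast
        then show "y m' s \<in> cache m"
          using decoded[OF c'] other_inter_subset_cache[OF c c'] unfolding mc mc' by blast
      qed
    qed
  qed
  then have "{H \<in> users r P z. benefited d H (transmission d y J i j s)} = user_group J i j"
    using group benefited_by_image_mem[OF distinct_demands group, of _ "\<lambda>m. y m s"]
    unfolding transmission_def by blast
  moreover have "card (user_group J i j) = 2 ^ z"
    using card_user_group[of J i j] J pairs finite_subset[OF J(1)] by simp
  ultimately show ?thesis ..
qed
end
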